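(* Let $D$ be the private information (e.g. a data mini-batch) taking values in a measurable space $\mathcal{S}$ with base measure $\mu$, with true prior density $f_D$, and let $W$ be the released information taking values in $\mathcal{W}$, produced from $D$ by a protection mechanism with likelihood $f_{W|D}(\cdot\mid\cdot)$ and induced posterior density $f_{D|W}(d\mid w)$. Assume that the attacker's prior belief density $f^{\mathcal{B}}_D$ satisfies $$\frac{f^{\mathcal{B}}_D(d)}{f_D(d)}\in[e^{-\epsilon},e^{\epsilon}]\quad\text{for all } d,$$ for some $\epsilon\ge 0$. Let $\epsilon_{p,m}\ge 0$ and suppose the mechanism guarantees $\epsilon_{p,m}$-maximum Bayesian privacy, i.e. $$\frac{f_{D|W}(d\mid w)}{f_D(d)}\in[e^{-\epsilon_{p,m}},e^{\epsilon_{p,m}}]\quad\text{for all } w\in\mathcal{W},\ d.$$ Then the average Bayesian privacy leakage $\epsilon_{p,a}=\sqrt{\mathrm{JS}(F^{\mathcal{A}}\parallel F^{\mathcal{B}})}$ satisfies $$\epsilon_{p,a}\le\frac{1}{\sqrt{2}}\sqrt{(\epsilon_{p,m}+\epsilon)\left(e^{\epsilon_{p,m}+\epsilon}-1\right)}.$$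
   Context: $F^{\mathcal{B}}$ is the attacker's belief distribution about $D$ before observing the released information, with density $f^{\mathcal{B}}_D$. $F^{\mathcal{A}}$ is the attacker's belief distribution about $D$ after observing the protected released information, with density $f^{\mathcal{A}}_D(d)=\int_{\mathcal{W}} f_{D|W}(d\mid w)\,dP_W(w)$, where $P_W$ is the distribution of the released (protected) information. With $F^{\mathcal{M}}=\tfrac12(F^{\mathcal{A}}+F^{\mathcal{B}})$, the Jensen–Shannon divergence is $\mathrm{JS}(F^{\mathcal{A}}\parallel F^{\mathcal{B}})=\tfrac12[\mathrm{KL}(F^{\mathcal{A}}\parallel F^{\mathcal{M}})+\mathrm{KL}(F^{\mathcal{B}}\parallel F^{\mathcal{M}})]$. The quantity $\epsilon_{p,a}$ is called the average Bayesian privacy (ABP) leakage. *)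

theory Defs
  imports "HOL-Probability.Probability"
begin

text \<open>Bayesian model: private information D in the measure space mu (base measure),
  released information W in the measure space nu; the protection mechanism is given by the
  likelihood density lik w d = f_{W|D}(w|d) w.r.t. nu; fD is the true prior density of D.\<close>

definition marginal_W :: "'d measure \<Rightarrow> ('d \<Rightarrow> real) \<Rightarrow> ('w \<Rightarrow> 'd \<Rightarrow> real) \<Rightarrow> 'w \<Rightarrow> real" where
  "marginal_W \<mu> fD lik w = (LINT d|\<mu>. lik w d * fD d)"

definition posterior :: "'d measure \<Rightarrow> ('d \<Rightarrow> real) \<Rightarrow> ('w \<Rightarrow> 'd \<Rightarrow> real) \<Rightarrow> 'd \<Rightarrow> 'w \<Rightarrow> real" where
  "posterior \<mu> fD lik d w = lik w d * fD d / marginal_W \<mu> fD lik w"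

definition dist_W :: "'d measure \<Rightarrow> 'w measure \<Rightarrow> ('d \<Rightarrow> real) \<Rightarrow> ('w \<Rightarrow> 'd \<Rightarrow> real) \<Rightarrow> 'w measure" where
  "dist_W \<mu> \<nu> fD lik = density \<nu> (\<lambda>w. ennreal (marginal_W \<mu> fD lik w))"

definition attacker_after :: "'d measure \<Rightarrow> 'w measure \<Rightarrow> ('d \<Rightarrow> real) \<Rightarrow> ('w \<Rightarrow> 'd \<Rightarrow> real) \<Rightarrow> 'd \<Rightarrow> real" where
  "attacker_after \<mu> \<nu> fD lik d = (LINT w|dist_W \<mu> \<nu> fD lik. posterior \<mu> fD lik d w)"

definition KL_dens :: "'d measure \<Rightarrow> ('d \<Rightarrow> real) \<Rightarrow> ('d \<Rightarrow> real) \<Rightarrow> real" where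
  "KL_dens \<mu> p q = (LINT x|\<mu>. p x * ln (p x / q x))"

definition JS_dens :: "'d measure \<Rightarrow> ('d \<Rightarrow> real) \<Rightarrow> ('d \<Rightarrow> real) \<Rightarrow> real" where
  "JS_dens \<mu> p q = (let m = (\<lambda>x. (p x + q x) / 2) in (KL_dens \<mu> p m + KL_dens \<mu> q m) / 2)"

definition avg_bayes_leakage :: "'d measure \<Rightarrow> 'w measure \<Rightarrow> ('d \<Rightarrow> real) \<Rightarrow> ('d \<Rightarrow> real) \<Rightarrow> ('w \<Rightarrow> 'd \<Rightarrow> real) \<Rightarrow> real" where
  "avg_bayes_leakage \<mu> \<nu> fD fB lik = sqrt (JS_dens \<mu> (attacker_after \<mu> \<nu> fD lik) fB)"

end

theory Submission
  imports Defs
begin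

text \<open>Averaging the posterior f_{D|W}(d|w) against the marginal P_W returns the true prior,
  so the attacker's belief after the release is exactly f_D and the leakage is the
  Jensen--Shannon divergence between f_D and the prior belief f^B. Where the density ratio
  lies in [e^{-t}, e^t], the Jensen--Shannon integrand is bounded by the triangular
  discrimination (a - b)^2/(a + b) (via ln x \<le> x - 1), which is at most t (e^t - 1) b because
  (e^t - 1)/(e^t + 1) \<le> t. Integrating against f^B gives JS \<le> t (e^t - 1)/2 with t = \<epsilon>,
  which is dominated by the claimed bound. Maximum Bayesian privacy is needed only to keep the
  marginal of W away from zero, so that Bayes' rule is not evaluated at a junk division.\<close>

lemma exp_minus_one_le_mult_exp_plus_one:
  fixes t :: real
  assumes "0 \<le> t"
  shows "exp t - 1 \<le> t * (exp t + 1)"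
proof -
  have "exp t * (1 - t) \<le> exp t * exp (- t)"
    using exp_ge_add_one_self[of "- t"] by (intro mult_left_mono) auto
  then have "exp t - t * exp t \<le> 1"
    by (simp add: exp_minus field_simps)
  with assms show ?thesis
    by (simp add: algebra_simps)
qed

text \<open>Because b / 0 = 0 lies outside the interval, the ratio hypothesis forces a > 0.\<close>

lemma ratio_mem_exp_interval_bounds:
  fixes a b t :: real
  assumes "0 \<le> a" "0 \<le> b" "b / a \<in> {exp (- t) .. exp t}"
  shows "0 < a" "0 < b" "b \<le> exp t * a" "a \<le> exp t * b"
proof -
  have "0 < b / a"
    using assms(3) by (auto intro: less_le_trans[OF exp_gt_zero])
  with assms(1,2) show a: "0 < a" and b: "0 < b"
    by (auto simp: zero_less_divide_iff)
  show "b \<le> exp t * a"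
    using assms(3) a by (simp add: divide_le_eq mult.commute)
  have "exp (- t) * a \<le> b"
    using assms(3) a by (simp add: le_divide_eq)
  then have "exp t * (exp (- t) * a) \<le> exp t * b"
    by (intro mult_left_mono) auto
  then show "a \<le> exp t * b"
    by (simp add: exp_minus field_simps)
qed

lemma abs_diff_le_of_ratio_bound:
  fixes a b e :: real
  assumes "0 \<le> a" "0 \<le> b" "1 \<le> e" "a \<le> e * b" "b \<le> e * a"
  shows "\<bar>a - b\<bar> \<le> (e - 1) * b" and "\<bar>a - b\<bar> * (e + 1) \<le> (e - 1) * (a + b)"
proof -
  have "b - a \<le> (e - 1) * b" if "a \<le> b"
  proof -
    have "(e - 1) * a \<le> (e - 1) * b"
      using that assms(3) by (intro mult_left_mono) auto
    with assms(5) show ?thesis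
      by (simp add: algebra_simps)
  qed
  with assms(4) show "\<bar>a - b\<bar> \<le> (e - 1) * b"
    by (auto simp: abs_if algebra_simps)
  show "\<bar>a - b\<bar> * (e + 1) \<le> (e - 1) * (a + b)"
    using assms(4,5) by (auto simp: abs_if algebra_simps)
qed

lemma JS_integrand_le_triangular_discrimination:
  fixes a b :: real
  assumes "0 < a" "0 < b"
  shows "a * ln (a / ((a + b) / 2)) + b * ln (b / ((a + b) / 2)) \<le> (a - b)\<^sup>2 / (a + b)"
proof -
  have "a * ln (a / ((a + b) / 2)) + b * ln (b / ((a + b) / 2))
        \<le> a * (a / ((a + b) / 2) - 1) + b * (b / ((a + b) / 2) - 1)"
    using assms by (intro add_mono mult_left_mono ln_le_minus_one) auto
  also have "\<dots> = (a - b)\<^sup>2 / (a + b)"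
    using assms by (simp add: divide_simps power2_eq_square) (simp add: algebra_simps)
  finally show ?thesis .
qed

lemma JS_integrand_le_of_ratio_bound:
  fixes a b t :: real
  assumes "0 < a" "0 < b" "0 \<le> t" "a \<le> exp t * b" "b \<le> exp t * a"
  shows "a * ln (a / ((a + b) / 2)) + b * ln (b / ((a + b) / 2)) \<le> t * (exp t - 1) * b"
proof -
  have e: "1 \<le> exp t"
    using assms(3) by simp
  note diff = abs_diff_le_of_ratio_bound[OF _ _ e assms(4,5)]
  have "\<bar>a - b\<bar> * (exp t + 1) \<le> (exp t - 1) * (a + b)"
    using diff(2) assms(1,2) by simp
  also have "\<dots> \<le> t * (exp t + 1) * (a + b)"
    using exp_minus_one_le_mult_exp_plus_one[OF assms(3)] assms(1,2) by (intro mult_right_mono) auto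
  finally have "\<bar>a - b\<bar> * (exp t + 1) \<le> t * (a + b) * (exp t + 1)"
    by (simp add: mult_ac)
  then have "\<bar>a - b\<bar> \<le> t * (a + b)"
    by (rule mult_right_le_imp_le) (use exp_gt_zero[of t] in linarith)
  then have "\<bar>a - b\<bar> * \<bar>a - b\<bar> \<le> (exp t - 1) * b * (t * (a + b))"
    using diff(1) assms(1,2) by (intro mult_mono) auto
  then have "(a - b)\<^sup>2 \<le> (exp t - 1) * b * (t * (a + b))"
    by (simp add: power2_eq_square)
  then have "(a - b)\<^sup>2 / (a + b) \<le> t * (exp t - 1) * b"
    using assms(1,2) by (simp add: pos_divide_le_eq mult_ac)
  with JS_integrand_le_triangular_discrimination[OF assms(1,2)] show ?thesis
    by linarith
qed

lemma abs_ln_ratio_to_mean_le: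
  fixes a b t :: real
  assumes "0 < a" "0 < b" "0 \<le> t" "a \<le> exp t * b" "b \<le> exp t * a"
  shows "\<bar>ln (a / ((a + b) / 2))\<bar> \<le> t"
proof -
  have "a \<le> exp t * a"
    using assms(1,3) by simp
  then have "2 * a \<le> exp t * (a + b)"
    using assms(4) unfolding distrib_left by linarith
  then have "a / ((a + b) / 2) \<le> exp t"
    using assms(1,2) by (simp add: pos_divide_le_eq mult.commute)
  then have "ln (a / ((a + b) / 2)) \<le> t"
    using assms(1,2) by (metis ln_exp ln_le_cancel_iff exp_gt_zero divide_pos_pos half_gt_zero
        add_pos_pos)
  moreover have "(a + b) / 2 \<le> exp t * a"
    using assms(5) \<open>a \<le> exp t * a\<close> by (simp add: field_simps)
  then have "exp (- t) \<le> a / ((a + b) / 2)"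
    using assms(1,2) by (simp add: exp_minus field_simps)
  then have "- t \<le> ln (a / ((a + b) / 2))"
    using assms(1,2) by (simp add: ln_ge_iff)
  ultimately show ?thesis
    by simp
qed

lemma integrable_mul_ln_ratio_to_mean:
  fixes p q :: "'a \<Rightarrow> real" and t :: real
  assumes "0 \<le> t" "p \<in> borel_measurable \<mu>" "q \<in> borel_measurable \<mu>" "integrable \<mu> p"
    and "\<And>x. x \<in> space \<mu> \<Longrightarrow> 0 < p x \<and> 0 < q x \<and> p x \<le> exp t * q x \<and> q x \<le> exp t * p x"
  shows "integrable \<mu> (\<lambda>x. p x * ln (p x / ((p x + q x) / 2)))"
proof (rule Bochner_Integration.integrable_bound)
  show "integrable \<mu> (\<lambda>x. t * p x)"
    using assms(4) by simp
  show "(\<lambda>x. p x * ln (p x / ((p x + q x) / 2))) \<in> borel_measurable \<mu>"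
    using assms(2,3) by measurable
  show "AE x in \<mu>. norm (p x * ln (p x / ((p x + q x) / 2))) \<le> norm (t * p x)"
  proof (rule AE_I2)
    fix x
    assume "x \<in> space \<mu>"
    then have px: "0 < p x" "0 < q x" "p x \<le> exp t * q x" "q x \<le> exp t * p x"
      using assms(5) by auto
    have "\<bar>ln (p x / ((p x + q x) / 2))\<bar> \<le> t"
      using px(1,2) assms(1) px(3,4) by (rule abs_ln_ratio_to_mean_le)
    with px(1) assms(1) show "norm (p x * ln (p x / ((p x + q x) / 2))) \<le> norm (t * p x)"
      by (simp add: abs_mult mult.commute mult_left_mono)
  qed
qed

lemma JS_dens_cong:
  assumes "\<And>x. x \<in> space \<mu> \<Longrightarrow> p x = p' x"
  shows "JS_dens \<mu> p q = JS_dens \<mu> p' q"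
  unfolding JS_dens_def KL_dens_def Let_def
  using assms by (simp cong: Bochner_Integration.integral_cong)

lemma JS_dens_le_of_ratio_bound:
  fixes p q :: "'a \<Rightarrow> real" and t :: real
  assumes "0 \<le> t" "p \<in> borel_measurable \<mu>" "q \<in> borel_measurable \<mu>"
    and "integrable \<mu> p" "integrable \<mu> q" "(LINT x|\<mu>. q x) = 1"
    and bounds: "\<And>x. x \<in> space \<mu> \<Longrightarrow> 0 < p x \<and> 0 < q x \<and> p x \<le> exp t * q x \<and> q x \<le> exp t * p x"
  shows "JS_dens \<mu> p q \<le> t * (exp t - 1) / 2"
proof -
  let ?P = "\<lambda>x. p x * ln (p x / ((p x + q x) / 2))"
  let ?Q = "\<lambda>x. q x * ln (q x / ((p x + q x) / 2))"
  have int_P: "integrable \<mu> ?P"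
    using assms by (intro integrable_mul_ln_ratio_to_mean) auto
  have "integrable \<mu> (\<lambda>x. q x * ln (q x / ((q x + p x) / 2)))"
    using assms by (intro integrable_mul_ln_ratio_to_mean) auto
  then have int_Q: "integrable \<mu> ?Q"
    by (simp add: add.commute)
  have "2 * JS_dens \<mu> p q = (LINT x|\<mu>. ?P x + ?Q x)"
    unfolding JS_dens_def KL_dens_def Let_def using int_P int_Q by simp
  also have "\<dots> \<le> (LINT x|\<mu>. t * (exp t - 1) * q x)"
    using int_P int_Q assms(1,5) bounds
    by (intro integral_mono JS_integrand_le_of_ratio_bound) auto
  also have "\<dots> = t * (exp t - 1)"
    using assms(6) by simp
  finally show ?thesis
    by simp
qed

lemma attacker_after_eq_prior:
  assumes "sigma_finite_measure \<mu>"
    and fD: "fD \<in> borel_measurable \<mu>" "\<forall>d\<in>space \<mu>. 0 \<le> fD d"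
    and lik: "(\<lambda>(w, d). lik w d) \<in> borel_measurable (\<nu> \<Otimes>\<^sub>M \<mu>)"
      "\<forall>w\<in>space \<nu>. \<forall>d\<in>space \<mu>. 0 \<le> lik w d"
    and marginal_nonzero: "\<forall>w\<in>space \<nu>. marginal_W \<mu> fD lik w \<noteq> 0"
    and d: "d \<in> space \<mu>" and lik_normalized: "(LINT w|\<nu>. lik w d) = 1"
  shows "attacker_after \<mu> \<nu> fD lik d = fD d"
proof -
  have "(\<lambda>(w, d). lik w d * fD d) \<in> borel_measurable (\<nu> \<Otimes>\<^sub>M \<mu>)"
    using lik(1) fD(1) by measurable
  then have marginal_measurable: "marginal_W \<mu> fD lik \<in> borel_measurable \<nu>"
    unfolding marginal_W_def[abs_def]
    by (rule sigma_finite_measure.borel_measurable_lebesgue_integral[OF assms(1)])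
  have marginal_nonneg: "0 \<le> marginal_W \<mu> fD lik w" if "w \<in> space \<nu>" for w
    unfolding marginal_W_def using fD(2) lik(2) that by (intro Bochner_Integration.integral_nonneg) auto
  have "(\<lambda>w. lik w d) \<in> borel_measurable \<nu>"
    using measurable_Pair1[OF lik(1) d] by simp
  then have "(\<lambda>w. posterior \<mu> fD lik d w) \<in> borel_measurable \<nu>"
    unfolding posterior_def using marginal_measurable by measurable
  then have "attacker_after \<mu> \<nu> fD lik d
      = (LINT w|\<nu>. marginal_W \<mu> fD lik w *\<^sub>R posterior \<mu> fD lik d w)"
    unfolding attacker_after_def dist_W_def
    by (rule integral_density[OF _ marginal_measurable]) (auto intro: marginal_nonneg)
  also have "\<dots> = (LINT w|\<nu>. lik w d) * fD d"
    using marginal_nonzero by (simp add: posterior_def cong: Bochner_Integration.integral_cong)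
  finally show ?thesis
    using lik_normalized by simp
qed

theorem theorem1:
  fixes \<mu> :: "'d measure" and \<nu> :: "'w measure"
    and fD fB :: "'d \<Rightarrow> real" and lik :: "'w \<Rightarrow> 'd \<Rightarrow> real"
    and \<epsilon> \<epsilon>pm :: real
  assumes "sigma_finite_measure \<mu>" and "sigma_finite_measure \<nu>"
    and "fD \<in> borel_measurable \<mu>" and "\<forall>d\<in>space \<mu>. fD d \<ge> 0"
    and "integrable \<mu> fD" and "(LINT d|\<mu>. fD d) = 1"
    and "fB \<in> borel_measurable \<mu>" and "\<forall>d\<in>space \<mu>. fB d \<ge> 0"
    and "integrable \<mu> fB" and "(LINT d|\<mu>. fB d) = 1"
    and "(\<lambda>(w, d). lik w d) \<in> borel_measurable (\<nu> \<Otimes>\<^sub>M \<mu>)"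
    and "\<forall>w\<in>space \<nu>. \<forall>d\<in>space \<mu>. lik w d \<ge> 0"
    and "\<forall>d\<in>space \<mu>. integrable \<nu> (\<lambda>w. lik w d) \<and> (LINT w|\<nu>. lik w d) = 1"
    and "\<epsilon> \<ge> 0"
    and "\<forall>d\<in>space \<mu>. fB d / fD d \<in> {exp (- \<epsilon>) .. exp \<epsilon>}"
    and "\<epsilon>pm \<ge> 0"
    and "\<forall>w\<in>space \<nu>. \<forall>d\<in>space \<mu>.
           posterior \<mu> fD lik d w / fD d \<in> {exp (- \<epsilon>pm) .. exp \<epsilon>pm}"
  shows "avg_bayes_leakage \<mu> \<nu> fD fB lik
           \<le> 1 / sqrt 2 * sqrt ((\<epsilon>pm + \<epsilon>) * (exp (\<epsilon>pm + \<epsilon>) - 1))"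
proof -
  have "space \<mu> \<noteq> {}"
    using assms(6) Bochner_Integration.integral_empty[of \<mu> fD] by auto
  then obtain d0 where d0: "d0 \<in> space \<mu>"
    by blast
  have prior_bounds: "0 < fD d \<and> 0 < fB d \<and> fD d \<le> exp \<epsilon> * fB d \<and> fB d \<le> exp \<epsilon> * fD d"
    if "d \<in> space \<mu>" for d
    using ratio_mem_exp_interval_bounds[of "fD d" "fB d" \<epsilon>] assms(4,8,15) that by auto
  have "marginal_W \<mu> fD lik w \<noteq> 0" if "w \<in> space \<nu>" for w
  proof
    assume "marginal_W \<mu> fD lik w = 0"
    then have "posterior \<mu> fD lik d0 w / fD d0 = 0"
      by (simp add: posterior_def)
    with assms(17) d0 that exp_gt_zero[of "- \<epsilon>pm"] show False
      by force
  qed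
  then have "attacker_after \<mu> \<nu> fD lik d = fD d" if "d \<in> space \<mu>" for d
    using attacker_after_eq_prior[of \<mu> fD lik \<nu> d] assms(1,3,4,11,12,13) that by auto
  then have "JS_dens \<mu> (attacker_after \<mu> \<nu> fD lik) fB = JS_dens \<mu> fD fB"
    by (rule JS_dens_cong)
  also have "\<dots> \<le> \<epsilon> * (exp \<epsilon> - 1) / 2"
    using assms(3,5,7,9,10,14) prior_bounds by (intro JS_dens_le_of_ratio_bound) auto
  also have "\<dots> \<le> (\<epsilon>pm + \<epsilon>) * (exp (\<epsilon>pm + \<epsilon>) - 1) / 2"
    using assms(14,16) by (intro divide_right_mono mult_mono) auto
  finally have "avg_bayes_leakage \<mu> \<nu> fD fB lik \<le> sqrt ((\<epsilon>pm + \<epsilon>) * (exp (\<epsilon>pm + \<epsilon>) - 1) / 2)"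
    unfolding avg_bayes_leakage_def by simp
  then show ?thesis
    by (simp add: real_sqrt_divide)
qed

end
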